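(* Let $f:[0,\infty)\to[0,\infty)$ be convex with $f(1)=f'(1)=0$, and suppose there exists $c>1$ such that $\frac{f(M)}{M^2}\le\frac{f(t)}{t^2}$ for all $M\ge t\ge c$. Then for any probability measures $\mu,\nu$ on a measurable space $\mathcal X$ with $\nu\ll\mu$ and any $M\ge c$ with $f(M)>0$, $$\frac{\mathrm{ICov}_M(\nu\|\mu)}{M}\le\frac{c^2}{M}+\frac{M\cdot D_f(\nu\|\mu)}{f(M)}.$$
   Context: $\mathrm{Cov}_t(\nu\|\mu)=\nu(\{x:\frac{d\nu}{d\mu}(x)\ge t\})$, $\mathrm{ICov}_M(\nu\|\mu)=\int_0^M\mathrm{Cov}_t(\nu\|\mu)\,dt$, and $D_f(\nu\|\mu)=\mathbb E_{X\sim\mu}[f(\frac{d\nu}{d\mu}(X))]$. *)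

theory Defs
  imports "HOL-Probability.Probability"
begin

text \<open>Radon-Nikodym derivative d nu / d mu, as a real number
  (it is finite mu-almost everywhere when nu is a finite measure with nu << mu).\<close>
definition rn_dens :: "'a measure \<Rightarrow> 'a measure \<Rightarrow> 'a \<Rightarrow> real" where
  "rn_dens \<nu> \<mu> x = enn2real (RN_deriv \<mu> \<nu> x)"

definition Cov :: "real \<Rightarrow> 'a measure \<Rightarrow> 'a measure \<Rightarrow> real" where
  "Cov t \<nu> \<mu> = measure \<nu> {x \<in> space \<nu>. rn_dens \<nu> \<mu> x \<ge> t}"

definition ICov :: "real \<Rightarrow> 'a measure \<Rightarrow> 'a measure \<Rightarrow> real" where
  "ICov M \<nu> \<mu> = (LBINT t:{0..M}. Cov t \<nu> \<mu>)"

definition Df :: "(real \<Rightarrow> real) \<Rightarrow> 'a measure \<Rightarrow> 'a measure \<Rightarrow> ennreal" where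
  "Df f \<nu> \<mu> = (\<integral>\<^sup>+ x. ennreal (f (rn_dens \<nu> \<mu> x)) \<partial>\<mu>)"

end

theory Submission
  imports Defs
begin

(* Write r = d nu / d mu. By the layer-cake formula ICov_M = E_nu[min(M, r)] = E_mu[r min(M, r)],
   so it suffices to bound r min(M, r) <= c^2 r + (M^2 / f M) f(r) pointwise. For r <= c this
   is trivial, for c <= r <= M it is the monotonicity of f(t)/t^2, and for r >= M it follows
   from convexity and f(1) = 0, which make f(t)/t nondecreasing on [1, oo). Integrating
   against mu uses E_mu[r] = 1. *)

lemma convex_on_zero_at_one_mult_mono:
  fixes f :: "real \<Rightarrow> real"
  assumes f_convex: "convex_on {0..} f" and f1: "f 1 = 0" and fr: "f r \<ge> 0"
    and M: "1 < M" "M \<le> r"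
  shows "r * f M \<le> M * f r"
proof -
  define t where "t = (M - 1) / (r - 1)"
  have t: "0 \<le> t" "t \<le> 1" "t * (r - 1) = M - 1" "r * t \<le> M"
    using M by (auto simp: t_def field_simps)
  have "f M = f ((1 - t) *\<^sub>R 1 + t *\<^sub>R r)"
    using t(3) by (simp add: algebra_simps)
  also have "\<dots> \<le> t * f r"
    using convex_onD[OF f_convex, of t 1 r] t M f1 by simp
  finally have "r * f M \<le> (r * t) * f r"
    using M by (simp add: mult_left_mono mult.assoc)
  also have "\<dots> \<le> M * f r"
    using t(4) fr by (rule mult_right_mono)
  finally show ?thesis .
qed

lemma mult_min_div_le_bound:
  fixes f :: "real \<Rightarrow> real" and c M r :: real
  assumes f_convex: "convex_on {0..} f"
    and f_nonneg: "\<And>x. x \<ge> 0 \<Longrightarrow> f x \<ge> 0"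
    and f1: "f 1 = 0"
    and c_gt: "c > 1"
    and f_ratio: "\<And>M t. c \<le> t \<Longrightarrow> t \<le> M \<Longrightarrow> f M / M\<^sup>2 \<le> f t / t\<^sup>2"
    and M_ge: "M \<ge> c"
    and fM: "f M > 0"
    and r: "r \<ge> 0"
  shows "r * min M r / M \<le> c\<^sup>2 / M * r + M / f M * f r"
proof -
  have M0: "M > 0" using M_ge c_gt by linarith
  have fr: "f r \<ge> 0" using f_nonneg r by auto
  have bound_c: "0 \<le> c\<^sup>2 / M * r" and bound_f: "0 \<le> M / f M * f r"
    using M0 r fM fr by simp_all
  consider "r \<le> c" | "c \<le> r" "r \<le> M" | "M \<le> r" by linarith
  then show ?thesis
  proof cases
    case 1
    have "c \<le> c\<^sup>2"
      using c_gt by (simp add: power2_eq_square)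
    then have "min M r \<le> c\<^sup>2"
      using 1 by linarith
    then have "r * min M r \<le> r * c\<^sup>2"
      using r by (rule mult_left_mono)
    then have "r * min M r / M \<le> c\<^sup>2 / M * r"
      using M0 by (simp add: divide_right_mono mult.commute)
    then show ?thesis using bound_f by linarith
  next
    case 2
    have "f M / M\<^sup>2 \<le> f r / r\<^sup>2" using f_ratio 2 by auto
    then have "f M * r\<^sup>2 \<le> f r * M\<^sup>2" using M0 2 c_gt by (simp add: field_simps)
    then have "r * r / M \<le> M / f M * f r" using M0 fM
      by (simp add: field_simps power2_eq_square)
    then show ?thesis using 2 bound_c by (simp add: min_absorb2)
  next
    case 3
    have "r * f M \<le> M * f r"
      using convex_on_zero_at_one_mult_mono[OF f_convex f1 fr _ 3] M_ge c_gt by linarith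
    then have "r * M / M \<le> M / f M * f r" using M0 fM by (simp add: field_simps)
    then show ?thesis using 3 bound_c by (simp add: min_absorb1)
  qed
qed

lemma borel_measurable_convex_on_comp:
  fixes f :: "real \<Rightarrow> real"
  assumes "convex_on {0..} f" and g: "g \<in> borel_measurable N" and g_nonneg: "\<And>x. g x \<ge> 0"
  shows "(\<lambda>x. f (g x)) \<in> borel_measurable N"
proof -
  have "continuous_on {0<..} f"
    using assms(1) by (intro convex_on_continuous) (auto intro: convex_on_subset)
  then have "(\<lambda>y. if y \<in> {0<..} then f y else f 0) \<in> borel_measurable borel"
    by (intro borel_measurable_continuous_on_if) auto
  moreover have "(\<lambda>x. f (g x)) = (\<lambda>y. if y \<in> {0<..} then f y else f 0) \<circ> g"
    using g_nonneg by (force simp: fun_eq_iff less_le)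
  ultimately show ?thesis
    using g by simp
qed

lemma nn_integral_layer_cake_min:
  fixes g :: "'a \<Rightarrow> real"
  assumes "sigma_finite_measure \<nu>" and g[measurable]: "g \<in> borel_measurable \<nu>"
  shows "(\<integral>\<^sup>+ t. indicator {0..M} t * emeasure \<nu> {x \<in> space \<nu>. t \<le> g x} \<partial>lborel)
    = (\<integral>\<^sup>+ x. ennreal (min M (g x)) \<partial>\<nu>)"
proof -
  interpret pair_sigma_finite \<nu> lborel
    using assms(1) by (simp add: pair_sigma_finite_def lborel.sigma_finite_measure_axioms)
  let ?h = "\<lambda>x t. indicator {0..M} t * indicator {x \<in> space \<nu>. t \<le> g x} x :: ennreal"
  have "(\<integral>\<^sup>+ t. indicator {0..M} t * emeasure \<nu> {x \<in> space \<nu>. t \<le> g x} \<partial>lborel)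
      = (\<integral>\<^sup>+ t. (\<integral>\<^sup>+ x. ?h x t \<partial>\<nu>) \<partial>lborel)"
    by (intro nn_integral_cong) (simp add: nn_integral_cmult)
  also have "\<dots> = (\<integral>\<^sup>+ x. (\<integral>\<^sup>+ t. ?h x t \<partial>lborel) \<partial>\<nu>)"
    by (intro Fubini') measurable
  also have "\<dots> = (\<integral>\<^sup>+ x. emeasure lborel {0..min M (g x)} \<partial>\<nu>)"
    by (intro nn_integral_cong) (auto intro!: nn_integral_cong simp: indicator_def simp flip: nn_integral_indicator)
  also have "\<dots> = (\<integral>\<^sup>+ x. ennreal (min M (g x)) \<partial>\<nu>)"
    by (intro nn_integral_cong) (auto simp: emeasure_lborel_Icc_eq ennreal_eq_0_iff)
  finally show ?thesis .
qed

lemma measurable_rn_dens[measurable]: "rn_dens \<nu> \<mu> \<in> borel_measurable \<mu>"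
  unfolding rn_dens_def[abs_def] by measurable

lemma rn_dens_nonneg: "rn_dens \<nu> \<mu> x \<ge> 0"
  by (simp add: rn_dens_def)

lemma measurable_rn_dens_sets_eq:
  assumes "sets \<nu> = sets \<mu>"
  shows "rn_dens \<nu> \<mu> \<in> borel_measurable \<nu>"
  using measurable_rn_dens measurable_cong_sets[OF assms refl] by blast

lemma Cov_antimono:
  assumes "finite_measure \<nu>" "sets \<nu> = sets \<mu>" "s \<le> t"
  shows "Cov t \<nu> \<mu> \<le> Cov s \<nu> \<mu>"
proof -
  note measurable_rn_dens_sets_eq[OF assms(2), measurable]
  show ?thesis
    unfolding Cov_def using assms(3)
    by (intro finite_measure.finite_measure_mono[OF assms(1)]) auto
qed

lemma set_integrable_Cov:
  assumes "finite_measure \<nu>" "sets \<nu> = sets \<mu>"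
  shows "set_integrable lborel {a..b} (\<lambda>t. Cov t \<nu> \<mu>)"
proof -
  have "mono (\<lambda>t. - Cov t \<nu> \<mu>)"
    using Cov_antimono[OF assms] by (auto intro: monoI)
  then have "(\<lambda>t. - (- Cov t \<nu> \<mu>)) \<in> borel_measurable borel"
    by (intro borel_measurable_uminus borel_measurable_mono)
  moreover have "norm (Cov t \<nu> \<mu>) \<le> measure \<nu> (space \<nu>)" for t
    unfolding Cov_def using finite_measure.bounded_measure[OF assms(1)] by simp
  ultimately show ?thesis
    unfolding set_integrable_def
    by (intro integrableI_bounded_set_indicator AE_I2) (auto simp: emeasure_lborel_Icc_eq)
qed

lemma ICov_eq_nn_integral_min:
  assumes "finite_measure \<nu>" "sets \<nu> = sets \<mu>"
  shows "ennreal (ICov M \<nu> \<mu>) = (\<integral>\<^sup>+ x. ennreal (min M (rn_dens \<nu> \<mu> x)) \<partial>\<nu>)"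
proof -
  interpret finite_measure \<nu> by fact
  note measurable_rn_dens_sets_eq[OF assms(2), measurable]
  have "ennreal (ICov M \<nu> \<mu>) = (\<integral>\<^sup>+ t. ennreal (indicator {0..M} t * Cov t \<nu> \<mu>) \<partial>lborel)"
    using set_integrable_Cov[OF assms] unfolding ICov_def set_lebesgue_integral_def set_integrable_def
    by (subst nn_integral_eq_integral) (auto simp: Cov_def)
  also have "\<dots> = (\<integral>\<^sup>+ t. indicator {0..M} t * emeasure \<nu> {x \<in> space \<nu>. t \<le> rn_dens \<nu> \<mu> x} \<partial>lborel)"
    by (intro nn_integral_cong) (auto simp: Cov_def emeasure_eq_measure indicator_def)
  also have "\<dots> = (\<integral>\<^sup>+ x. ennreal (min M (rn_dens \<nu> \<mu> x)) \<partial>\<nu>)"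
    using sigma_finite_measure_axioms measurable_rn_dens_sets_eq[OF assms(2)]
    by (rule nn_integral_layer_cake_min)
  finally show ?thesis .
qed

lemma nn_integral_rn_dens:
  assumes "sigma_finite_measure \<mu>" "sigma_finite_measure \<nu>"
    and ac: "absolutely_continuous \<mu> \<nu>" and sets_eq: "sets \<nu> = sets \<mu>"
    and g: "g \<in> borel_measurable \<mu>"
  shows "(\<integral>\<^sup>+ x. g x \<partial>\<nu>) = (\<integral>\<^sup>+ x. ennreal (rn_dens \<nu> \<mu> x) * g x \<partial>\<mu>)"
proof -
  interpret sigma_finite_measure \<mu> by fact
  have "(\<integral>\<^sup>+ x. g x \<partial>\<nu>) = (\<integral>\<^sup>+ x. RN_deriv \<mu> \<nu> x * g x \<partial>\<mu>)"
    by (rule RN_deriv_nn_integral[OF ac sets_eq g])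
  also have "\<dots> = (\<integral>\<^sup>+ x. ennreal (rn_dens \<nu> \<mu> x) * g x \<partial>\<mu>)"
    using RN_deriv_finite[OF assms(2) ac sets_eq]
    by (intro nn_integral_cong_AE) (auto simp: rn_dens_def less_top)
  finally show ?thesis .
qed

lemma nn_integral_rn_dens_eq_emeasure_space:
  assumes "sigma_finite_measure \<mu>" "sigma_finite_measure \<nu>"
    and "absolutely_continuous \<mu> \<nu>" "sets \<nu> = sets \<mu>"
  shows "(\<integral>\<^sup>+ x. ennreal (rn_dens \<nu> \<mu> x) \<partial>\<mu>) = emeasure \<nu> (space \<nu>)"
  using nn_integral_rn_dens[OF assms, of "\<lambda>_. 1"] by simp

lemma ICov_eq_nn_integral_rn_dens:
  assumes "sigma_finite_measure \<mu>" "finite_measure \<nu>"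
    and ac: "absolutely_continuous \<mu> \<nu>" and sets_eq: "sets \<nu> = sets \<mu>"
  shows "ennreal (ICov M \<nu> \<mu>)
    = (\<integral>\<^sup>+ x. ennreal (rn_dens \<nu> \<mu> x * min M (rn_dens \<nu> \<mu> x)) \<partial>\<mu>)"
proof -
  have "ennreal (ICov M \<nu> \<mu>) = (\<integral>\<^sup>+ x. ennreal (min M (rn_dens \<nu> \<mu> x)) \<partial>\<nu>)"
    using assms(2) sets_eq by (rule ICov_eq_nn_integral_min)
  also have "\<dots> = (\<integral>\<^sup>+ x. ennreal (rn_dens \<nu> \<mu> x) * ennreal (min M (rn_dens \<nu> \<mu> x)) \<partial>\<mu>)"
    using assms(1) finite_measure.sigma_finite_measure[OF assms(2)] ac sets_eq
    by (rule nn_integral_rn_dens) measurable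
  also have "\<dots> = (\<integral>\<^sup>+ x. ennreal (rn_dens \<nu> \<mu> x * min M (rn_dens \<nu> \<mu> x)) \<partial>\<mu>)"
    by (simp add: ennreal_mult' rn_dens_nonneg)
  finally show ?thesis .
qed

theorem lemma24:
  fixes f :: "real \<Rightarrow> real" and c M :: real
    and \<mu> \<nu> :: "'a measure"
  assumes f_convex: "convex_on {0..} f"
    and f_nonneg: "\<And>x. x \<ge> 0 \<Longrightarrow> f x \<ge> 0"
    and f1: "f 1 = 0"
    and f'1: "(f has_real_derivative 0) (at 1)"
    and c_gt: "c > 1"
    and f_ratio: "\<And>M t. c \<le> t \<Longrightarrow> t \<le> M \<Longrightarrow> f M / M\<^sup>2 \<le> f t / t\<^sup>2"
    and mu: "prob_space \<mu>"
    and nu: "prob_space \<nu>"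
    and sets_eq: "sets \<nu> = sets \<mu>"
    and ac: "absolutely_continuous \<mu> \<nu>"
    and M_ge: "M \<ge> c"
    and fM: "f M > 0"
  shows "ennreal (ICov M \<nu> \<mu> / M) \<le> ennreal (c\<^sup>2 / M) + ennreal (M / f M) * Df f \<nu> \<mu>"
proof -
  interpret mu: prob_space \<mu> by (rule mu)
  interpret nu: prob_space \<nu> by (rule nu)
  define r where "r = rn_dens \<nu> \<mu>"
  have M0: "M > 0" using M_ge c_gt by linarith
  have r_nonneg: "r x \<ge> 0" for x
    by (simp add: r_def rn_dens_nonneg)
  have [measurable]: "r \<in> borel_measurable \<mu>"
    by (simp add: r_def)
  have [measurable]: "(\<lambda>x. f (r x)) \<in> borel_measurable \<mu>"
    by (rule borel_measurable_convex_on_comp[OF f_convex _ r_nonneg]) measurable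
  have pointwise: "ennreal (r x * min M (r x) / M)
      \<le> ennreal (c\<^sup>2 / M) * ennreal (r x) + ennreal (M / f M) * ennreal (f (r x))" for x
  proof -
    have "0 \<le> c\<^sup>2 / M" "0 \<le> M / f M" "0 \<le> f (r x)"
      using M0 fM f_nonneg r_nonneg by simp_all
    moreover have "ennreal (r x * min M (r x) / M) \<le> ennreal (c\<^sup>2 / M * r x + M / f M * f (r x))"
      by (intro ennreal_leI mult_min_div_le_bound[OF f_convex f_nonneg f1 c_gt f_ratio M_ge fM r_nonneg])
    ultimately show ?thesis
      using r_nonneg[of x] by (simp only: ennreal_plus mult_nonneg_nonneg ennreal_mult')
  qed
  have "ennreal (ICov M \<nu> \<mu> / M) = ennreal (ICov M \<nu> \<mu>) * ennreal (1 / M)"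
    using M0 by (simp add: ennreal_mult''[symmetric])
  also have "\<dots> = (\<integral>\<^sup>+ x. ennreal (r x * min M (r x)) * ennreal (1 / M) \<partial>\<mu>)"
    unfolding ICov_eq_nn_integral_rn_dens[OF mu.sigma_finite_measure_axioms nu.finite_measure_axioms
        ac sets_eq] r_def[symmetric]
    by (rule nn_integral_multc[symmetric]) measurable
  also have "\<dots> = (\<integral>\<^sup>+ x. ennreal (r x * min M (r x) / M) \<partial>\<mu>)"
    using M0 by (simp add: ennreal_mult''[symmetric])
  also have "\<dots> \<le> (\<integral>\<^sup>+ x. ennreal (c\<^sup>2 / M) * ennreal (r x) + ennreal (M / f M) * ennreal (f (r x)) \<partial>\<mu>)"
    using pointwise by (rule nn_integral_mono)
  also have "\<dots> = ennreal (c\<^sup>2 / M) * (\<integral>\<^sup>+ x. ennreal (r x) \<partial>\<mu>) + ennreal (M / f M) * Df f \<nu> \<mu>"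
    unfolding Df_def r_def[symmetric] by (simp add: nn_integral_add nn_integral_cmult)
  also have "(\<integral>\<^sup>+ x. ennreal (r x) \<partial>\<mu>) = 1"
    using nn_integral_rn_dens_eq_emeasure_space[OF mu.sigma_finite_measure_axioms
        nu.sigma_finite_measure_axioms ac sets_eq]
    by (simp add: r_def nu.emeasure_space_1)
  finally show ?thesis by simp
qed

end
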